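(* Let $a<b$ and let $f,g:[a,b]\to\mathbb{R}$ be differentiable on $[a,b]$ (one-sided derivatives at the endpoints), and suppose $f$ and $g$ are twice differentiable at the point $a$ (from the right). Suppose $g(a)\neq g(b)$ and put $K=\frac{f(b)-f(a)}{g(b)-g(a)}$. If $$\bigl[f'(a)-K\,g'(a)\bigr]\cdot\bigl[f''(a)-K\,g''(a)\bigr]> 0,$$ then there exists $\eta\in(a,b)$ such that $$f'(\eta)-\frac{f(\eta)-f(a)}{\eta-a}=K\left[g'(\eta)-\frac{g(\eta)-g(a)}{\eta-a}\right].$$
   Context: Differentiability on a closed interval $[a,b]$ means differentiability on $(a,b)$ together with existence of the one-sided derivatives at $a$ and $b$. *)

theory Defs
  imports "HOL-Analysis.Analysis"
begin

end

theory Submission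
  imports Defs
begin

text \<open>Subtracting \<open>K g\<close> from \<open>f\<close> reduces the claim to a Flett-type mean value theorem for
  \<open>h = f - K g\<close>, which satisfies \<open>h a = h b\<close>: some \<open>\<eta>\<close> has \<open>h' \<eta>\<close> equal to the secant slope
  \<open>\<phi> \<eta> = (h \<eta> - h a) / (\<eta> - a)\<close>. Up to a sign, \<open>h' a > 0\<close> and \<open>h'' a > 0\<close>. Then \<open>h'\<close> increases to
  the right of \<open>a\<close>, so by the mean value theorem \<open>\<phi> x\<^sub>1 > h' a\<close> for some \<open>x\<^sub>1\<close>; since \<open>\<phi> \<rightarrow> h' a\<close>
  at \<open>a\<close> and \<open>\<phi> b = 0 < h' a\<close>, the maximum of \<open>\<phi>\<close> on \<open>[c, b]\<close>, for \<open>c\<close> close to \<open>a\<close>, is interior, and there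
  \<open>\<phi>' = (h' - \<phi>) / (x - a)\<close> vanishes.\<close>

lemma secant_slope_gt_deriv_at_right:
  fixes h h' :: "real \<Rightarrow> real" and h'' a b :: real
  assumes ab: "a < b"
    and dh: "\<And>x. x \<in> {a..b} \<Longrightarrow> (h has_real_derivative h' x) (at x within {a..b})"
    and d2h: "(h' has_real_derivative h'') (at_right a)"
    and pos: "h'' > 0"
  shows "\<exists>x\<in>{a<..<b}. (h x - h a) / (x - a) > h' a"
proof -
  have "((\<lambda>y. (h' y - h' a) / (y - a)) \<longlongrightarrow> h'') (at a within {a<..})"
    using d2h by (simp add: has_field_derivative_iff)
  hence "\<forall>\<^sub>F y in at a within {a<..}. (h' y - h' a) / (y - a) > 0"
    using pos by (rule order_tendstoD(1))
  then obtain d where "d > 0"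
    and d: "\<And>y. y \<in> {a<..} \<Longrightarrow> y \<noteq> a \<Longrightarrow> dist y a < d \<Longrightarrow> (h' y - h' a) / (y - a) > 0"
    unfolding eventually_at by blast
  define x where "x = a + min d (b - a) / 2"
  have x: "a < x" "x < b" "x < a + d"
    using \<open>d > 0\<close> ab by (auto simp: x_def min_def field_simps)
  have h'_gt: "h' y > h' a" if "a < y" "y < x" for y
    using d[of y] that x by (auto simp: dist_real_def zero_less_divide_iff)
  have "\<exists>z\<in>{a<..<x}. (h x - h' a * x) - (h a - h' a * a) = (\<lambda>t. (h' z - h' a) * t) (x - a)"
  proof (rule mvt_simple[OF x(1)])
    fix y assume "a \<le> y" "y \<le> x"
    hence "(h has_real_derivative h' y) (at y within {a..x})"
      using dh[of y] x by (auto intro: DERIV_subset)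
    hence "((\<lambda>y. h y - h' a * y) has_real_derivative h' y - h' a) (at y within {a..x})"
      by (auto intro!: derivative_eq_intros)
    thus "((\<lambda>y. h y - h' a * y) has_derivative (\<lambda>t. (h' y - h' a) * t)) (at y within {a..x})"
      by (simp add: has_field_derivative_def mult.commute[of _ "h' a"])
  qed
  then obtain z where "a < z" "z < x" "h x - h' a * x - (h a - h' a * a) = (h' z - h' a) * (x - a)"
    by auto
  moreover have "(h' z - h' a) * (x - a) > 0"
    using h'_gt[of z] \<open>a < z\<close> \<open>z < x\<close> by simp
  ultimately have "h x - h a > h' a * (x - a)"
    by (simp add: algebra_simps)
  thus ?thesis
    using x by (intro bexI[of _ x]) (auto simp: field_simps)
qed

lemma secant_slope_max_point:
  fixes h h' :: "real \<Rightarrow> real" and a b :: real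
  assumes ab: "a < b"
    and dh: "\<And>x. x \<in> {a..b} \<Longrightarrow> (h has_real_derivative h' x) (at x within {a..b})"
    and hab: "h a = h b" and h'a: "h' a > 0"
    and x: "x \<in> {a<..<b}" and slope_x: "(h x - h a) / (x - a) > h' a"
  shows "\<exists>\<eta>\<in>{a<..<b}. h' \<eta> = (h \<eta> - h a) / (\<eta> - a)"
proof -
  define \<phi> where "\<phi> y = (h y - h a) / (y - a)" for y
  have "(\<phi> \<longlongrightarrow> h' a) (at a within {a..b})"
    using dh[of a] ab unfolding \<phi>_def by (simp add: has_field_derivative_iff)
  hence "\<forall>\<^sub>F y in at a within {a..b}. \<phi> y < \<phi> x"
    using slope_x unfolding \<phi>_def[of x, symmetric] by (rule order_tendstoD(2))
  then obtain e where "e > 0" and e: "\<And>y. y \<in> {a..b} \<Longrightarrow> y \<noteq> a \<Longrightarrow> dist y a < e \<Longrightarrow> \<phi> y < \<phi> x"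
    unfolding eventually_at by blast
  define c where "c = a + min e (x - a) / 2"
  have c: "a < c" "c < x" using \<open>e > 0\<close> x by (auto simp: c_def min_def field_simps)
  have \<phi>c: "\<phi> c < \<phi> x" using e[of c] c x \<open>e > 0\<close> by (auto simp: c_def dist_real_def min_def)
  have \<phi>b: "\<phi> b < \<phi> x" using slope_x h'a hab by (simp add: \<phi>_def)
  have "continuous_on {a..b} h"
    using dh by (meson DERIV_continuous continuous_on_eq_continuous_within)
  hence "continuous_on {c..b} \<phi>"
    unfolding \<phi>_def using c by (auto intro!: continuous_intros elim: continuous_on_subset)
  then obtain \<eta> where \<eta>: "\<eta> \<in> {c..b}" and max: "\<And>y. y \<in> {c..b} \<Longrightarrow> \<phi> y \<le> \<phi> \<eta>"
    using continuous_attains_sup[of "{c..b}" \<phi>] c x by auto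
  have "\<phi> x \<le> \<phi> \<eta>" using max[of x] c x by auto
  hence \<eta>_int: "c < \<eta>" "\<eta> < b" using \<eta> \<phi>c \<phi>b by (auto simp: order.order_iff_strict)
  hence "at \<eta> within {a..b} = at \<eta>" using c by (intro at_within_interior) auto
  hence "(h has_real_derivative h' \<eta>) (at \<eta>)" using dh[of \<eta>] \<eta>_int c by auto
  hence "(\<phi> has_real_derivative (h' \<eta> * (\<eta> - a) - (h \<eta> - h a)) / (\<eta> - a)^2) (at \<eta>)"
    unfolding \<phi>_def using \<eta>_int c by (auto intro!: derivative_eq_intros simp: power2_eq_square)
  hence "(h' \<eta> * (\<eta> - a) - (h \<eta> - h a)) / (\<eta> - a)^2 = 0"
  proof (rule DERIV_local_max)
    show "0 < min (\<eta> - c) (b - \<eta>)" using \<eta>_int by simp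
    show "\<forall>y. \<bar>\<eta> - y\<bar> < min (\<eta> - c) (b - \<eta>) \<longrightarrow> \<phi> y \<le> \<phi> \<eta>"
      using max by (auto simp: abs_less_iff)
  qed
  thus ?thesis using \<eta>_int c by (intro bexI[of _ \<eta>]) (auto simp: field_simps)
qed

lemma flett_mean_value_second_order:
  fixes h h' :: "real \<Rightarrow> real" and h'' a b :: real
  assumes ab: "a < b"
    and dh: "\<And>x. x \<in> {a..b} \<Longrightarrow> (h has_real_derivative h' x) (at x within {a..b})"
    and d2h: "(h' has_real_derivative h'') (at_right a)"
    and hab: "h a = h b" and pos: "h' a * h'' > 0"
  shows "\<exists>\<eta>\<in>{a<..<b}. h' \<eta> = (h \<eta> - h a) / (\<eta> - a)"
proof -
  have pos_case: "\<exists>\<eta>\<in>{a<..<b}. k' \<eta> = (k \<eta> - k a) / (\<eta> - a)"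
    if dk: "\<And>x. x \<in> {a..b} \<Longrightarrow> (k has_real_derivative k' x) (at x within {a..b})"
      and d2k: "(k' has_real_derivative k'') (at_right a)"
      and "k a = k b" "k' a > 0" "k'' > 0" for k k' :: "real \<Rightarrow> real" and k''
  proof -
    obtain x where "x \<in> {a<..<b}" "(k x - k a) / (x - a) > k' a"
      using secant_slope_gt_deriv_at_right[OF ab dk d2k \<open>k'' > 0\<close>] by blast
    thus ?thesis using secant_slope_max_point[OF ab dk] that by blast
  qed
  show ?thesis
  proof (cases "h' a > 0")
    case True
    thus ?thesis using pos_case[OF dh d2h hab] pos by (simp add: zero_less_mult_iff)
  next
    case False
    have "\<exists>\<eta>\<in>{a<..<b}. - h' \<eta> = (- h \<eta> - - h a) / (\<eta> - a)"
    proof (rule pos_case)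
      show "((\<lambda>x. - h x) has_real_derivative - h' x) (at x within {a..b})" if "x \<in> {a..b}" for x
        using dh[OF that] by (rule DERIV_minus)
      show "((\<lambda>x. - h' x) has_real_derivative - h'') (at_right a)"
        using d2h by (rule DERIV_minus)
    qed (use False pos hab in \<open>auto simp: zero_less_mult_iff\<close>)
    then obtain \<eta> where "\<eta> \<in> {a<..<b}" "- h' \<eta> = (- h \<eta> - - h a) / (\<eta> - a)" ..
    thus ?thesis by (intro bexI[of _ \<eta>]) (auto simp: field_simps)
  qed
qed

theorem mainTheorem4:
  fixes f g f' g' :: "real \<Rightarrow> real" and f'' g'' a b :: real
  assumes ab: "a < b"
    and df: "\<And>x. x \<in> {a..b} \<Longrightarrow> (f has_real_derivative f' x) (at x within {a..b})"
    and dg: "\<And>x. x \<in> {a..b} \<Longrightarrow> (g has_real_derivative g' x) (at x within {a..b})"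
    and d2f: "(f' has_real_derivative f'') (at_right a)"
    and d2g: "(g' has_real_derivative g'') (at_right a)"
    and gab: "g a \<noteq> g b"
    and pos: "(f' a - ((f b - f a) / (g b - g a)) * g' a) * (f'' - ((f b - f a) / (g b - g a)) * g'') > 0"
  shows "\<exists>\<eta>\<in>{a<..<b}. f' \<eta> - (f \<eta> - f a) / (\<eta> - a)
           = ((f b - f a) / (g b - g a)) * (g' \<eta> - (g \<eta> - g a) / (\<eta> - a))"
proof -
  define K where "K = (f b - f a) / (g b - g a)"
  have "\<exists>\<eta>\<in>{a<..<b}. f' \<eta> - K * g' \<eta> = ((f \<eta> - K * g \<eta>) - (f a - K * g a)) / (\<eta> - a)"
  proof (rule flett_mean_value_second_order[OF ab])
    show "((\<lambda>x. f x - K * g x) has_real_derivative f' x - K * g' x) (at x within {a..b})"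
      if "x \<in> {a..b}" for x
      using df[OF that] dg[OF that] by (auto intro!: derivative_eq_intros)
    show "((\<lambda>x. f' x - K * g' x) has_real_derivative f'' - K * g'') (at_right a)"
      using d2f d2g by (auto intro!: derivative_eq_intros)
    show "f a - K * g a = f b - K * g b"
      using gab by (simp add: K_def field_simps)
  qed (use pos in \<open>simp add: K_def\<close>)
  then obtain \<eta> where "\<eta> \<in> {a<..<b}"
    and "f' \<eta> - K * g' \<eta> = ((f \<eta> - K * g \<eta>) - (f a - K * g a)) / (\<eta> - a)" ..
  thus ?thesis
    unfolding K_def[symmetric] by (intro bexI[of _ \<eta>]) (auto simp: field_simps)
qed

end
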